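(* Let $n \ge 2$ be an integer. For each $j \in \{1,\dots,n\}$ let $k_j, p_j, q_j, v_j$ be four distinct prime numbers with $k_j, p_j, q_j > v_j$; let $y_j$ be an integer with $1 \le y_j < v_j$, and let $y_j^{-1}$ denote the integer with $1 \le y_j^{-1} < v_j$ and $y_j \cdot y_j^{-1} \equiv 1 \pmod{v_j}$. Define $$N_j = k_j p_j,\qquad e_j = k_j q_j + y_j^{-1},\qquad d_j = v_j^{k_j} \bmod N_j,$$ and assume that $N_1,\dots,N_n$ are pairwise relatively prime. Let $f_j, t_j, r_j$ be positive integers and define $$N'_j = N_j f_j + d_j t_j,\qquad X=\prod_{l=1}^n N_l,$$ let $A_j$ be an integer with $A_j\cdot \frac{X}{N_j} \equiv 1 \pmod{N_j}$, and set $$AX_j = A_j \cdot \frac{X}{N_j},\qquad e'_j = e_j + N'_j r_j,\qquad S_j = e'_j \cdot AX_j .$$ Let $m_1,\dots,m_n$ be nonnegative integers and let $$C = \Big(\sum_{j=1}^n m_j S_j\Big) \bmod X .$$ Fix $i \in \{1,\dots,n\}$ and suppose that $m_i < v_i$ and $$m_i < \frac{k_i}{y_i^{-1} + v_i\, t_i\, r_i}.$$ Then $$\big((C \bmod k_i)\cdot y_i\big) \bmod v_i = m_i .$$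
   Context: This is the correctness (validation) of the AMOUN multi-recipient encryption scheme: recipient $i$ has private key $(k_i, v_i, y_i)$ and public key $(N_i, e_i, d_i)$; the sender, using the public keys of all $n$ recipients and random integers $f_j,t_j$ (initialization) and random coins $r_j$ (encryption), forms a single ciphertext $C$ encoding the message vector $(m_1,\dots,m_n)$; recipient $i$ decrypts by computing $((C \bmod k_i)\cdot y_i) \bmod v_i$. Here $a \bmod b$ denotes the least nonnegative residue of $a$ modulo $b$. *)

theory Defs
  imports "HOL-Number_Theory.Number_Theory"
begin

end

theory Submission
  imports Defs
begin

text \<open>Everything is reduced modulo the key prime \<open>k\<^sub>i\<close>. Since \<open>k\<^sub>i\<close> divides \<open>N\<^sub>i\<close>, it
  divides \<open>X\<close> and every \<open>X / N\<^sub>j\<close> with \<open>j \<noteq> i\<close>, so \<open>C \<equiv> m\<^sub>i e'\<^sub>i\<close> (mod \<open>k\<^sub>i\<close>).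
  By Fermat, \<open>d\<^sub>i \<equiv> v\<^sub>i ^ k\<^sub>i \<equiv> v\<^sub>i\<close>, hence \<open>e'\<^sub>i \<equiv> y\<^sub>i\<^sup>-\<^sup>1 + v\<^sub>i t\<^sub>i r\<^sub>i\<close> (mod \<open>k\<^sub>i\<close>). The size bound
  on \<open>m\<^sub>i\<close> turns this congruence into the equality \<open>C mod k\<^sub>i = m\<^sub>i (y\<^sub>i\<^sup>-\<^sup>1 + v\<^sub>i t\<^sub>i r\<^sub>i)\<close>, and
  multiplying by \<open>y\<^sub>i\<close> modulo \<open>v\<^sub>i\<close> leaves \<open>m\<^sub>i\<close>.\<close>

lemma fermat_little_int:
  fixes p a :: int
  assumes "prime p"
  shows "[a ^ nat p = a] (mod p)"
proof -
  define P where "P = nat p"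
  define b where "b = nat (a mod p)"
  have P: "prime P" "p = int P"
    using assms prime_gt_0_int[OF assms] by (auto simp: P_def)
  have a_b: "[a = int b] (mod p)"
    using prime_gt_0_int[OF assms] by (simp add: b_def cong_def)
  have "[b ^ P = b] (mod P)"
  proof (cases "P dvd b")
    case True
    moreover have "P dvd b ^ P"
      using True prime_gt_0_nat[OF P(1)] by (metis dvd_trans dvd_power)
    ultimately show ?thesis
      by (metis cong_0_iff cong_sym cong_trans)
  next
    case False
    then have "[b ^ (P - 1) * b = 1 * b] (mod P)"
      using fermat_theorem[OF P(1)] cong_scalar_right by blast
    then show ?thesis
      using prime_gt_0_nat[OF P(1)] by (simp add: power_Suc2[symmetric])
  qed
  then have "[int b ^ P = int b] (mod p)"
    using P(2) by (metis cong_int_iff of_nat_power)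
  then show ?thesis
    using a_b P_def by (meson cong_pow cong_sym cong_trans)
qed

lemma dvd_prod_div_other_factor:
  fixes N :: "'a \<Rightarrow> 'b::semidom_divide"
  assumes "finite I" "i \<in> I" "j \<in> I" "i \<noteq> j" "N j \<noteq> 0"
  shows "N i dvd prod N I div N j"
proof -
  have "prod N I div N j = prod N (I - {j})"
    using assms prod.remove[OF assms(1,3), of N] by simp
  then show ?thesis
    using assms by auto
qed

lemma sum_cong_single_term:
  fixes g :: "'a \<Rightarrow> 'b::unique_euclidean_semiring"
  assumes "finite I" "i \<in> I" "\<And>j. j \<in> I \<Longrightarrow> j \<noteq> i \<Longrightarrow> c dvd g j"
  shows "[(\<Sum>j\<in>I. g j) = g i] (mod c)"
proof -
  have "c dvd (\<Sum>j\<in>I - {i}. g j)"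
    using assms(3) by (intro dvd_sum) auto
  then have "[g i + (\<Sum>j\<in>I - {i}. g j) = g i + 0] (mod c)"
    by (intro cong_add cong_refl) (simp add: cong_0_iff)
  then show ?thesis
    using sum.remove[OF assms(1,2), of g] by simp
qed

lemma crt_sum_mod_cong_component:
  fixes N A x :: "'a \<Rightarrow> int"
  assumes "finite I" "i \<in> I" "\<And>j. j \<in> I \<Longrightarrow> N j \<noteq> 0" "c dvd N i"
    and "[A i * (prod N I div N i) = 1] (mod N i)"
  shows "[(\<Sum>j\<in>I. x j * (A j * (prod N I div N j))) mod prod N I = x i] (mod c)"
proof -
  have "c dvd prod N I"
    using assms(1,2,4) by (meson dvd_prodI dvd_trans)
  then have "[(\<Sum>j\<in>I. x j * (A j * (prod N I div N j))) mod prod N I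
      = (\<Sum>j\<in>I. x j * (A j * (prod N I div N j)))] (mod c)"
    by (meson cong_dvd_modulus cong_mod_left cong_refl)
  also have "[(\<Sum>j\<in>I. x j * (A j * (prod N I div N j))) = x i * (A i * (prod N I div N i))] (mod c)"
  proof (rule sum_cong_single_term)
    show "c dvd x j * (A j * (prod N I div N j))" if "j \<in> I" "j \<noteq> i" for j
      using dvd_trans[OF assms(4) dvd_prod_div_other_factor[of I i j N]] assms(1-3) that by simp
  qed (use assms in auto)
  also have "[x i * (A i * (prod N I div N i)) = x i * 1] (mod c)"
    using assms(4,5) by (intro cong_mult cong_refl) (rule cong_dvd_modulus)
  finally show ?thesis
    by simp
qed

lemma mult_less_of_real_less_divide:
  fixes a b d :: int
  assumes "0 < d" "real_of_int a < real_of_int b / real_of_int d"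
  shows "a * d < b"
proof -
  have "real_of_int (a * d) < real_of_int b"
    using assms by (simp add: pos_less_divide_eq)
  then show ?thesis
    by (simp only: of_int_less_iff)
qed

lemma encryption_exponent_cong_mod_key:
  fixes k p q v yinv f t r :: int
  assumes "prime k"
  shows "[k * q + yinv + (k * p * f + (v ^ nat k mod (k * p)) * t) * r = yinv + v * t * r] (mod k)"
proof -
  have "[v ^ nat k mod (k * p) = v ^ nat k] (mod k)"
    by (simp add: cong_def mod_mod_cancel)
  also have "[v ^ nat k = v] (mod k)"
    using fermat_little_int[OF assms] .
  finally have "[v ^ nat k mod (k * p) = v] (mod k)" .
  then have "[k * q + yinv + (k * p * f + (v ^ nat k mod (k * p)) * t) * r
      = 0 * q + yinv + (0 * p * f + v * t) * r] (mod k)"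
    by (intro cong_add cong_mult cong_refl) (simp_all add: cong_0_iff)
  then show ?thesis
    by (simp add: algebra_simps)
qed

lemma decryption_mod_eq:
  fixes m v y yinv s :: int
  assumes "[y * yinv = 1] (mod v)" "0 \<le> m" "m < v"
  shows "(m * (yinv + v * s) * y) mod v = m"
proof -
  have "[m * (y * yinv) + v * (m * s * y) = m * 1 + 0] (mod v)"
    using assms(1) by (intro cong_add cong_mult cong_refl) (simp_all add: cong_0_iff)
  then have "[m * (yinv + v * s) * y = m] (mod v)"
    by (simp add: algebra_simps)
  then show ?thesis
    using assms(2,3) by (simp add: cong_def)
qed

theorem mainTheorem1:
  fixes n :: nat and i :: nat
    and k p q v y yinv N e d f t r N' A AX e' S m :: "nat \<Rightarrow> int"
    and X C :: int
  assumes hn: "n \<ge> 2"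
    and hprime: "\<forall>j\<in>{1..n}. prime (k j) \<and> prime (p j) \<and> prime (q j) \<and> prime (v j)"
    and hdistinct: "\<forall>j\<in>{1..n}. distinct [k j, p j, q j, v j]"
    and hgt: "\<forall>j\<in>{1..n}. k j > v j \<and> p j > v j \<and> q j > v j"
    and hy: "\<forall>j\<in>{1..n}. 1 \<le> y j \<and> y j < v j"
    and hyinv: "\<forall>j\<in>{1..n}. 1 \<le> yinv j \<and> yinv j < v j \<and> [y j * yinv j = 1] (mod v j)"
    and hN: "\<forall>j\<in>{1..n}. N j = k j * p j"
    and he: "\<forall>j\<in>{1..n}. e j = k j * q j + yinv j"
    and hd: "\<forall>j\<in>{1..n}. d j = (v j ^ nat (k j)) mod N j"
    and hcop: "\<forall>j\<in>{1..n}. \<forall>l\<in>{1..n}. j \<noteq> l \<longrightarrow> coprime (N j) (N l)"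
    and hpos: "\<forall>j\<in>{1..n}. f j > 0 \<and> t j > 0 \<and> r j > 0"
    and hN': "\<forall>j\<in>{1..n}. N' j = N j * f j + d j * t j"
    and hX: "X = (\<Prod>l\<in>{1..n}. N l)"
    and hA: "\<forall>j\<in>{1..n}. [A j * (X div N j) = 1] (mod N j)"
    and hAX: "\<forall>j\<in>{1..n}. AX j = A j * (X div N j)"
    and he': "\<forall>j\<in>{1..n}. e' j = e j + N' j * r j"
    and hS: "\<forall>j\<in>{1..n}. S j = e' j * AX j"
    and hm: "\<forall>j\<in>{1..n}. m j \<ge> 0"
    and hC: "C = (\<Sum>j\<in>{1..n}. m j * S j) mod X"
    and hi: "i \<in> {1..n}"
    and hmv: "m i < v i"
    and hmk: "real_of_int (m i) < real_of_int (k i) / real_of_int (yinv i + v i * t i * r i)"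
  shows "((C mod k i) * y i) mod v i = m i"
proof -
  define D where "D = yinv i + v i * t i * r i"
  have N_nonzero: "N j \<noteq> 0" if "j \<in> {1..n}" for j
    using hN hprime that by (metis mult_eq_0_iff not_prime_0)
  have "C = (\<Sum>j\<in>{1..n}. (m j * e' j) * (A j * (prod N {1..n} div N j))) mod prod N {1..n}"
    using hC hS hAX hX by (simp add: mult.assoc)
  also have "[\<dots> = m i * e' i] (mod k i)"
    using N_nonzero hN hA hX hi by (intro crt_sum_mod_cong_component) auto
  also have "[m i * e' i = m i * D] (mod k i)"
    using encryption_exponent_cong_mod_key[of "k i"] he' he hN' hN hd hprime hi
    unfolding D_def by (intro cong_scalar_left) simp
  finally have C_cong: "[C = m i * D] (mod k i)" .
  have "0 < v i * t i * r i"
    using hprime hpos hi prime_gt_0_int by simp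
  then have D_pos: "0 < D"
    using hyinv hi unfolding D_def by fastforce
  have "m i * D < k i"
    using mult_less_of_real_less_divide[OF D_pos] hmk unfolding D_def by blast
  moreover have "0 \<le> m i * D"
    using hm hi D_pos by simp
  ultimately have "C mod k i = m i * D"
    using C_cong by (simp add: cong_def)
  then show ?thesis
    using decryption_mod_eq[of "y i" "yinv i" "v i" "m i" "t i * r i"] hyinv hm hmv hi
    unfolding D_def by (simp add: mult.assoc)
qed

end
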